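(* Let $A$, $\bar A$, $H$ be as in the context. Then $\frac m4\le\kappa([\bar A;A])=\kappa(H)=\frac{\sin\left(\frac{(3m_1m_2-1)\pi}{6m_1m_2}\right)}{\sin\left(\frac{\pi}{6m_1m_2}\right)}<m$.
   Context: Let $L_f>0$, integers $m_1\ge2$, $m_2\ge1$ with $m_1m_2$ even, $m=3m_1m_2$, $\bar d\ge5$ odd. $J_p\in\mathbb R^{(p-1)\times p}$ has $-1$ at $(k,k)$, $1$ at $(k,k+1)$, zero elsewhere. $H=mL_f(J_m\otimes I_{\bar d})$. $\mathcal M=\{im_1:i=1,\dots,3m_2-1\}$, $\mathcal M^C=\{1,\dots,m-1\}\setminus\mathcal M$; $\bar A=mL_f(J_{\mathcal M}\otimes I_{\bar d})$, $A=mL_f(J_{\mathcal M^C}\otimes I_{\bar d})$ where $J_{\mathcal M},J_{\mathcal M^C}$ are the rows of $J_m$ indexed by $\mathcal M,\mathcal M^C$. $[\bar A;A]$ is $\bar A$ stacked above $A$. For a matrix $M$, $\kappa(M)=\sqrt{\lambda_{\max}(MM^\top)/\lambda^+_{\min}(MM^\top)}$, where $\lambda^+_{\min}$ is the smallest positive eigenvalue. *)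

theory Defs
  imports Complex_Main "Jordan_Normal_Form.Char_Poly"
begin

definition Jmat :: "nat \<Rightarrow> real mat" where
  "Jmat p = mat (p - 1) p (\<lambda>(k, j). if j = k then -1 else if j = k + 1 then 1 else 0)"

definition kron :: "real mat \<Rightarrow> real mat \<Rightarrow> real mat" where
  "kron A B = mat (dim_row A * dim_row B) (dim_col A * dim_col B)
     (\<lambda>(i, j). A $$ (i div dim_row B, j div dim_col B) * B $$ (i mod dim_row B, j mod dim_col B))"

definition select_rows :: "real mat \<Rightarrow> nat list \<Rightarrow> real mat" where
  "select_rows A rs = mat (length rs) (dim_col A) (\<lambda>(i, j). A $$ (rs ! i, j))"

definition stack :: "real mat \<Rightarrow> real mat \<Rightarrow> real mat" where
  "stack A B = mat (dim_row A + dim_row B) (dim_col A)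
     (\<lambda>(i, j). if i < dim_row A then A $$ (i, j) else B $$ (i - dim_row A, j))"

(* index sets, 1-indexed as in the paper, listed increasingly *)
definition Mset :: "nat \<Rightarrow> nat \<Rightarrow> nat list" where
  "Mset m1 m2 = map (\<lambda>i. i * m1) [1..<3 * m2]"

definition MCset :: "nat \<Rightarrow> nat \<Rightarrow> nat list" where
  "MCset m1 m2 = filter (\<lambda>k. k \<notin> set (Mset m1 m2)) [1..<3 * m1 * m2]"

definition Jrows :: "nat \<Rightarrow> nat list \<Rightarrow> real mat" where
  "Jrows m rs = select_rows (Jmat m) (map (\<lambda>k. k - 1) rs)"

definition kappa :: "real mat \<Rightarrow> real" where
  "kappa M = sqrt (Max {l. eigenvalue (M * transpose_mat M) l}
                   / Min {l. eigenvalue (M * transpose_mat M) l \<and> l > 0})"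

end

(*
  All three matrices have the form c (X \<otimes> I_d) with c = m L_f and X made of rows of J_m.
  The rows of [Abar; A] are a permutation of those of H, so both have the same Gram matrix,
  hence the same positive eigenvalues of M M^T and the same condition number.
  Moreover H H^T = c^2 (J_m J_m^T \<otimes> I_d), and J_m J_m^T = tridiag(-1, 2, -1) of size m - 1
  has the sine eigenvectors (sin (j k \<pi> / m))_j with eigenvalues 4 sin^2 (k \<pi> / (2 m)),
  k = 1, ..., m - 1; being m - 1 distinct values, they form the whole spectrum.
  So kappa H = sin ((m - 1) \<pi> / (2 m)) / sin (\<pi> / (2 m)) = cot (\<pi> / (2 m)), and
  x cos x < sin x \<le> x turns this into m / 4 \<le> cot (\<pi> / (2 m)) < m.
*)
theory Submission
  imports Defs
begin

lemma div_mod_less_of_less_mult: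
  fixes i a b :: nat
  assumes "i < a * b"
  shows "i div b < a" "i mod b < b"
  using assms by (simp_all add: less_mult_imp_div_less) (cases "b = 0"; simp)

lemma block_index_less:
  fixes i p n d :: nat
  assumes "i < n" "p < d"
  shows "i * d + p < n * d"
proof -
  have "i * d + p < Suc i * d" using assms(2) by simp
  also have "\<dots> \<le> n * d" using assms(1) by (intro mult_le_mono1) simp
  finally show ?thesis .
qed

lemma sum_mult_blocks:
  fixes F :: "nat \<Rightarrow> 'a::comm_monoid_add"
  shows "(\<Sum>t<n * q. F t) = (\<Sum>a<n. \<Sum>b<q. F (a * q + b))"
  unfolding sum.nat_group[symmetric]
proof (rule sum.cong[OF refl])
  fix a
  show "sum F {a * q..<a * q + q} = (\<Sum>b<q. F (a * q + b))"
    by (subst sum.atLeastLessThan_shift_0) (simp add: lessThan_atLeast0 comp_def)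
qed

section \<open>Kronecker products\<close>

lemma dim_kron [simp]:
  "dim_row (kron A B) = dim_row A * dim_row B" "dim_col (kron A B) = dim_col A * dim_col B"
  unfolding kron_def by simp_all

lemma index_kron:
  assumes "i < dim_row A * dim_row B" "j < dim_col A * dim_col B"
  shows "kron A B $$ (i, j) = A $$ (i div dim_row B, j div dim_col B) * B $$ (i mod dim_row B, j mod dim_col B)"
  using assms unfolding kron_def by simp

lemma transpose_kron: "transpose_mat (kron A B) = kron (transpose_mat A) (transpose_mat B)"
  by (rule eq_matI) (auto simp: index_kron div_mod_less_of_less_mult)

lemma kron_mult:
  assumes AC: "dim_col A = dim_row C" and BD: "dim_col B = dim_row D"
  shows "kron A B * kron C D = kron (A * C) (B * D)"
proof (rule eq_matI)
  fix i j assume "i < dim_row (kron (A * C) (B * D))" "j < dim_col (kron (A * C) (B * D))"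
  then have i: "i < dim_row A * dim_row B" and j: "j < dim_col C * dim_col D" by simp_all
  note i' = div_mod_less_of_less_mult[OF i] and j' = div_mod_less_of_less_mult[OF j]
  let ?i1 = "i div dim_row B" and ?i2 = "i mod dim_row B"
  let ?j1 = "j div dim_col D" and ?j2 = "j mod dim_col D"
  have "(kron A B * kron C D) $$ (i, j) = (\<Sum>t<dim_col A * dim_col B. kron A B $$ (i, t) * kron C D $$ (t, j))"
    using i j by (simp add: scalar_prod_def lessThan_atLeast0 AC BD)
  also have "\<dots> = (\<Sum>a<dim_col A. \<Sum>b<dim_col B.
      (A $$ (?i1, a) * C $$ (a, ?j1)) * (B $$ (?i2, b) * D $$ (b, ?j2)))"
    unfolding sum_mult_blocks
  proof (intro sum.cong refl)
    fix a b assume "a \<in> {..<dim_col A}" and b: "b \<in> {..<dim_col B}"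
    then have "a * dim_col B + b < dim_col A * dim_col B" by (simp add: block_index_less)
    then show "kron A B $$ (i, a * dim_col B + b) * kron C D $$ (a * dim_col B + b, j)
      = (A $$ (?i1, a) * C $$ (a, ?j1)) * (B $$ (?i2, b) * D $$ (b, ?j2))"
      using i j b by (simp add: index_kron AC BD)
  qed
  also have "\<dots> = (A * C) $$ (?i1, ?j1) * (B * D) $$ (?i2, ?j2)"
    using i' j' by (simp add: scalar_prod_def lessThan_atLeast0 sum_product AC BD)
  also have "\<dots> = kron (A * C) (B * D) $$ (i, j)"
    using i j by (simp add: index_kron)
  finally show "(kron A B * kron C D) $$ (i, j) = kron (A * C) (B * D) $$ (i, j)" .
qed (use assms in simp_all)

lemma gram_kron_one:
  "transpose_mat (kron A (1\<^sub>m d)) * kron A (1\<^sub>m d) = kron (transpose_mat A * A) (1\<^sub>m d)"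
  "kron A (1\<^sub>m d) * transpose_mat (kron A (1\<^sub>m d)) = kron (A * transpose_mat A) (1\<^sub>m d)"
  by (simp_all add: transpose_kron kron_mult)

lemma kron_one_mult_vec:
  assumes T: "T \<in> carrier_mat n n" and w: "w \<in> carrier_vec (n * d)" and i: "i < n" and p: "p < d"
  shows "(kron T (1\<^sub>m d) *\<^sub>v w) $ (i * d + p) = (T *\<^sub>v vec n (\<lambda>s. w $ (s * d + p))) $ i"
proof -
  have "(kron T (1\<^sub>m d) *\<^sub>v w) $ (i * d + p) = (\<Sum>t<n * d. kron T (1\<^sub>m d) $$ (i * d + p, t) * w $ t)"
    using T w block_index_less[OF i p] by (simp add: scalar_prod_def lessThan_atLeast0)
  also have "\<dots> = (\<Sum>a<n. \<Sum>b<d. if b = p then T $$ (i, a) * w $ (a * d + p) else 0)"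
    unfolding sum_mult_blocks using T i p
    by (intro sum.cong refl) (auto simp: index_kron block_index_less)
  also have "\<dots> = (T *\<^sub>v vec n (\<lambda>s. w $ (s * d + p))) $ i"
    using T i p by (simp add: scalar_prod_def lessThan_atLeast0)
  finally show ?thesis .
qed

lemma eigenvalue_kron_one_mat_iff:
  assumes T: "T \<in> carrier_mat n n" and d: "0 < d"
  shows "eigenvalue (kron T (1\<^sub>m d)) l \<longleftrightarrow> eigenvalue T l"
proof
  assume "eigenvalue (kron T (1\<^sub>m d)) l"
  then obtain w where w: "w \<in> carrier_vec (n * d)" "w \<noteq> 0\<^sub>v (n * d)"
    and eig: "kron T (1\<^sub>m d) *\<^sub>v w = l \<cdot>\<^sub>v w"
    using T unfolding eigenvalue_def eigenvector_def by auto
  obtain a where a: "a < n * d" "w $ a \<noteq> 0"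
    using w by (metis eq_vecI carrier_vecD index_zero_vec)
  define p where "p = a mod d"
  define u where "u = vec n (\<lambda>s. w $ (s * d + p))"
  have p: "p < d" using d by (simp add: p_def)
  have "T *\<^sub>v u = l \<cdot>\<^sub>v u"
  proof (rule eq_vecI)
    fix i assume "i < dim_vec (l \<cdot>\<^sub>v u)"
    then have i: "i < n" by (simp add: u_def)
    have "(T *\<^sub>v u) $ i = (kron T (1\<^sub>m d) *\<^sub>v w) $ (i * d + p)"
      unfolding u_def using kron_one_mult_vec[OF T w(1) i p] by simp
    then show "(T *\<^sub>v u) $ i = (l \<cdot>\<^sub>v u) $ i"
      using eig w(1) i block_index_less[OF i p] by (simp add: u_def)
  qed (use T in \<open>simp add: u_def\<close>)
  moreover have "u \<noteq> 0\<^sub>v n"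
  proof -
    have "a div d < n" using a(1) by (rule div_mod_less_of_less_mult)
    moreover have "u $ (a div d) = w $ a" using \<open>a div d < n\<close> by (simp add: u_def p_def)
    ultimately show ?thesis using a(2) by auto
  qed
  moreover have "u \<in> carrier_vec n" by (simp add: u_def)
  ultimately show "eigenvalue T l"
    using T unfolding eigenvalue_def eigenvector_def by auto
next
  assume "eigenvalue T l"
  then obtain u where u: "u \<in> carrier_vec n" "u \<noteq> 0\<^sub>v n" and eig: "T *\<^sub>v u = l \<cdot>\<^sub>v u"
    using T unfolding eigenvalue_def eigenvector_def by auto
  define w where "w = vec (n * d) (\<lambda>a. u $ (a div d))"
  have w: "w \<in> carrier_vec (n * d)" by (simp add: w_def)
  have slice: "vec n (\<lambda>s. w $ (s * d + p)) = u" if "p < d" for p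
    using u(1) that by (intro eq_vecI) (auto simp: w_def block_index_less)
  have "kron T (1\<^sub>m d) *\<^sub>v w = l \<cdot>\<^sub>v w"
  proof (rule eq_vecI)
    fix a assume "a < dim_vec (l \<cdot>\<^sub>v w)"
    then have a: "a < n * d" by (simp add: w_def)
    have i: "a div d < n" and p: "a mod d < d" using div_mod_less_of_less_mult[OF a] by auto
    have "(kron T (1\<^sub>m d) *\<^sub>v w) $ (a div d * d + a mod d) = (l \<cdot>\<^sub>v u) $ (a div d)"
      unfolding kron_one_mult_vec[OF T w i p] slice[OF p] eig ..
    then show "(kron T (1\<^sub>m d) *\<^sub>v w) $ a = (l \<cdot>\<^sub>v w) $ a"
      using a i u(1) by (simp add: w_def)
  qed (use T w in simp)
  moreover have "w \<noteq> 0\<^sub>v (n * d)"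
  proof -
    obtain i where i: "i < n" "u $ i \<noteq> 0"
      using u by (metis eq_vecI carrier_vecD index_zero_vec)
    have "w $ (i * d + 0) = u $ i"
      using i(1) d block_index_less[OF i(1) d] by (simp add: w_def)
    then show ?thesis using i block_index_less[OF i(1) d] by auto
  qed
  ultimately show "eigenvalue (kron T (1\<^sub>m d)) l"
    using T w unfolding eigenvalue_def eigenvector_def by auto
qed

lemma dim_select_rows [simp]: "dim_row (select_rows M rs) = length rs" "dim_col (select_rows M rs) = dim_col M"
  unfolding select_rows_def by simp_all

lemma stack_select_rows: "stack (select_rows M r1) (select_rows M r2) = select_rows M (r1 @ r2)"
  by (rule eq_matI) (auto simp: stack_def select_rows_def nth_append)

lemma stack_smult_mat:
  assumes "dim_col A = dim_col B"
  shows "stack (c \<cdot>\<^sub>m A) (c \<cdot>\<^sub>m B) = c \<cdot>\<^sub>m stack A B"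
  using assms by (intro eq_matI) (auto simp: stack_def)

lemma stack_kron:
  assumes AB: "dim_col A = dim_col B"
  shows "stack (kron A C) (kron B C) = kron (stack A B) C"
proof (rule eq_matI)
  fix i j assume "i < dim_row (kron (stack A B) C)" "j < dim_col (kron (stack A B) C)"
  then have i: "i < (dim_row A + dim_row B) * dim_row C" and j: "j < dim_col A * dim_col C"
    by (simp_all add: stack_def)
  have i': "i div dim_row C < dim_row A + dim_row B" "i mod dim_row C < dim_row C"
    and j': "j div dim_col C < dim_col A" "j mod dim_col C < dim_col C"
    using div_mod_less_of_less_mult[OF i] div_mod_less_of_less_mult[OF j] by auto
  show "stack (kron A C) (kron B C) $$ (i, j) = kron (stack A B) C $$ (i, j)"
  proof (cases "i < dim_row A * dim_row C")
    case True
    then have "i div dim_row C < dim_row A" by (rule div_mod_less_of_less_mult)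
    then show ?thesis using True i j i' j' by (simp add: stack_def index_kron)
  next
    case False
    define k where "k = i - dim_row A * dim_row C"
    have ik: "i = dim_row A * dim_row C + k" using False by (simp add: k_def)
    have "0 < dim_row C" using i'(2) by simp
    then have "k div dim_row C = i div dim_row C - dim_row A" "k mod dim_row C = i mod dim_row C"
      "\<not> i div dim_row C < dim_row A"
      unfolding ik by simp_all
    moreover have "k < dim_row B * dim_row C" using i ik by (simp add: algebra_simps)
    ultimately show ?thesis using False i j i' j' AB by (simp add: stack_def index_kron k_def)
  qed
qed (simp_all add: stack_def algebra_simps AB)

lemma gram_select_rows_perm:
  assumes "distinct rs" "set rs = {0..<dim_row M}"
  shows "transpose_mat (select_rows M rs) * select_rows M rs = transpose_mat M * M"
proof (rule eq_matI)
  fix a b assume "a < dim_row (transpose_mat M * M)" "b < dim_col (transpose_mat M * M)"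
  then have a: "a < dim_col M" and b: "b < dim_col M" by simp_all
  have "(transpose_mat (select_rows M rs) * select_rows M rs) $$ (a, b)
      = (\<Sum>s<length rs. M $$ (rs ! s, a) * M $$ (rs ! s, b))"
    using a b by (simp add: select_rows_def scalar_prod_def lessThan_atLeast0)
  also have "\<dots> = (\<Sum>i\<in>set rs. M $$ (i, a) * M $$ (i, b))"
    using assms(1) by (simp add: sum.distinct_set_conv_list sum_list_sum_nth lessThan_atLeast0)
  also have "\<dots> = (transpose_mat M * M) $$ (a, b)"
    using a b assms(2) by (simp add: scalar_prod_def)
  finally show "(transpose_mat (select_rows M rs) * select_rows M rs) $$ (a, b) = (transpose_mat M * M) $$ (a, b)" .
qed (simp_all add: select_rows_def)

lemma Mset_MCset_perm:
  fixes m1 m2 :: nat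
  assumes m1: "1 \<le> m1"
  defines "rs \<equiv> map (\<lambda>k. k - 1) (Mset m1 m2 @ MCset m1 m2)"
  shows "distinct rs" and "set rs = {0..<3 * m1 * m2 - 1}"
proof -
  have M: "set (Mset m1 m2) \<subseteq> {1..<3 * m1 * m2}"
    using m1 by (auto simp: Mset_def)
  have MC: "set (MCset m1 m2) = {1..<3 * m1 * m2} - set (Mset m1 m2)"
    by (auto simp: MCset_def)
  have "distinct (Mset m1 m2)"
    using m1 by (auto simp: Mset_def distinct_map inj_on_def)
  then have "distinct (Mset m1 m2 @ MCset m1 m2)" using MC by (simp add: MCset_def)
  moreover have all: "set (Mset m1 m2 @ MCset m1 m2) = {1..<3 * m1 * m2}" using M MC by auto
  moreover have "inj_on (\<lambda>k. k - 1) {1..<3 * m1 * m2}" by (auto simp: inj_on_def)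
  ultimately show "distinct rs" unfolding rs_def by (metis distinct_map)
  have "(\<lambda>k. k - 1) ` {1..<3 * m1 * m2} = {0..<3 * m1 * m2 - 1}"
    by (force simp: image_iff intro: bexI[of _ "Suc _"])
  then show "set rs = {0..<3 * m1 * m2 - 1}" unfolding rs_def set_map all .
qed

lemma gram_smult_mat:
  fixes M :: "real mat"
  shows "transpose_mat (c \<cdot>\<^sub>m M) * (c \<cdot>\<^sub>m M) = c\<^sup>2 \<cdot>\<^sub>m (transpose_mat M * M)"
  "(c \<cdot>\<^sub>m M) * transpose_mat (c \<cdot>\<^sub>m M) = c\<^sup>2 \<cdot>\<^sub>m (M * transpose_mat M)"
  by (auto intro!: eq_matI sum.cong simp: scalar_prod_def sum_distrib_left power2_eq_square mult_ac)

section \<open>Eigenvalues and the condition number\<close>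

lemma eigenvalues_finite_card_le:
  fixes M :: "'a::field mat"
  assumes "M \<in> carrier_mat n n"
  shows "finite {l. eigenvalue M l}" "card {l. eigenvalue M l} \<le> n"
proof -
  have eq: "{l. eigenvalue M l} = {l. poly (char_poly M) l = 0}"
    using eigenvalue_root_char_poly[OF assms] by blast
  have deg: "degree (char_poly M) = n" and "char_poly M \<noteq> 0"
    using degree_monic_char_poly[OF assms] by auto
  then show "finite {l. eigenvalue M l}" "card {l. eigenvalue M l} \<le> n"
    unfolding eq using poly_roots_finite card_poly_roots_bound by (metis deg)+
qed

lemma eigenvalue_smult_mat_iff:
  fixes A :: "'a::field mat"
  assumes A: "A \<in> carrier_mat n n" and c: "c \<noteq> 0"
  shows "eigenvalue (c \<cdot>\<^sub>m A) l \<longleftrightarrow> eigenvalue A (l / c)"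
proof -
  have "(c \<cdot>\<^sub>m A) *\<^sub>v v = l \<cdot>\<^sub>v v \<longleftrightarrow> A *\<^sub>v v = (l / c) \<cdot>\<^sub>v v" if "v \<in> carrier_vec n" for v
  proof -
    have scaled: "(c \<cdot>\<^sub>m A) *\<^sub>v v = c \<cdot>\<^sub>v (A *\<^sub>v v)"
      using A that by (intro eq_vecI) simp_all
    have l: "l \<cdot>\<^sub>v v = c \<cdot>\<^sub>v ((l / c) \<cdot>\<^sub>v v)" and
      unscale: "x = (1 / c) \<cdot>\<^sub>v (c \<cdot>\<^sub>v x)" for x :: "'a vec"
      using c by (simp_all add: smult_smult_assoc)
    show ?thesis unfolding scaled l by (metis unscale)
  qed
  then show ?thesis unfolding eigenvalue_def eigenvector_def using A by auto
qed

lemma eigenvalue_mult_transpose_swap: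
  fixes N :: "real mat"
  assumes N: "N \<in> carrier_mat r n" and ev: "eigenvalue (N * transpose_mat N) l" and l: "l \<noteq> 0"
  shows "eigenvalue (transpose_mat N * N) l"
proof -
  obtain v where v: "v \<in> carrier_vec r" "v \<noteq> 0\<^sub>v r" and eig: "(N * transpose_mat N) *\<^sub>v v = l \<cdot>\<^sub>v v"
    using ev N unfolding eigenvalue_def eigenvector_def by auto
  define w where "w = transpose_mat N *\<^sub>v v"
  have w: "w \<in> carrier_vec n" using N v(1) by (simp add: w_def)
  have Nw: "N *\<^sub>v w = l \<cdot>\<^sub>v v" using N v(1) eig by (simp add: w_def)
  have "w \<noteq> 0\<^sub>v n"
  proof
    assume "w = 0\<^sub>v n"
    then have "N *\<^sub>v w = 0\<^sub>v r" using N by (intro eq_vecI) auto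
    then have lv: "l \<cdot>\<^sub>v v = 0\<^sub>v r" using Nw by simp
    have "v = (1 / l) \<cdot>\<^sub>v (l \<cdot>\<^sub>v v)" using l by (simp add: smult_smult_assoc)
    also have "\<dots> = 0\<^sub>v r" unfolding lv by (intro eq_vecI) auto
    finally show False using v(2) by simp
  qed
  moreover have "(transpose_mat N * N) *\<^sub>v w = l \<cdot>\<^sub>v w"
    using N v(1) w Nw by (simp add: w_def mult_mat_vec)
  ultimately show ?thesis using N w unfolding eigenvalue_def eigenvector_def by auto
qed

lemma pos_eigenvalues_mult_transpose:
  fixes N :: "real mat"
  assumes N: "N \<in> carrier_mat r n"
  shows "{l. eigenvalue (N * transpose_mat N) l \<and> 0 < l} = {l. eigenvalue (transpose_mat N * N) l \<and> 0 < l}"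
  using eigenvalue_mult_transpose_swap[OF N] eigenvalue_mult_transpose_swap[of "transpose_mat N" n r] N
  by auto

lemma kappa_eq_sqrt_Max_div_Min:
  fixes N :: "real mat"
  assumes N: "N \<in> carrier_mat r n" and pos: "\<exists>l>0. eigenvalue (N * transpose_mat N) l"
  shows "kappa N = sqrt (Max {l. eigenvalue (N * transpose_mat N) l \<and> 0 < l}
                        / Min {l. eigenvalue (N * transpose_mat N) l \<and> 0 < l})"
proof -
  let ?S = "{l. eigenvalue (N * transpose_mat N) l}"
  let ?P = "{l. eigenvalue (N * transpose_mat N) l \<and> 0 < l}"
  have fin: "finite ?S"
    using N by (intro eigenvalues_finite_card_le[of _ r]) auto
  obtain p where p: "p \<in> ?P" using pos by auto
  have sub: "?P \<subseteq> ?S" by auto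
  then have "p \<le> Max ?S" using fin p by (intro Max_ge) auto
  moreover have "Max ?S \<in> ?S" using fin p by (intro Max_in) auto
  ultimately have "Max ?S \<in> ?P" using p by auto
  then have "Max ?S = Max ?P"
    using fin sub p by (intro antisym Max_ge Max_mono) (auto intro: finite_subset)
  then show ?thesis unfolding kappa_def by simp
qed

lemma kappa_eq_if_gram_eq:
  fixes N N' :: "real mat"
  assumes N: "N \<in> carrier_mat r n" and N': "N' \<in> carrier_mat r' n'"
    and gram: "transpose_mat N * N = transpose_mat N' * N'"
    and pos: "\<exists>l>0. eigenvalue (N' * transpose_mat N') l"
  shows "kappa N = kappa N'"
proof -
  have P: "{l. eigenvalue (N * transpose_mat N) l \<and> 0 < l} = {l. eigenvalue (N' * transpose_mat N') l \<and> 0 < l}"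
    unfolding pos_eigenvalues_mult_transpose[OF N] pos_eigenvalues_mult_transpose[OF N'] gram ..
  have posN: "\<exists>l>0. eigenvalue (N * transpose_mat N) l"
    using pos P by blast
  show ?thesis
    using kappa_eq_sqrt_Max_div_Min[OF N posN] kappa_eq_sqrt_Max_div_Min[OF N' pos] P by simp
qed

section \<open>The second-difference matrix\<close>

definition second_diff_mat :: "nat \<Rightarrow> real mat" where
  "second_diff_mat n = mat n n (\<lambda>(i, j). if i = j then 2 else if i = j + 1 \<or> j = i + 1 then -1 else 0)"

text \<open>\<open>second_diff_eig n k = 2 - 2 cos (k \<pi> / (n + 1))\<close>, the classical eigenvalues of
  \<open>second_diff_mat n\<close>; the half-angle form makes their monotonicity in \<open>k\<close> evident.\<close>

definition second_diff_eig :: "nat \<Rightarrow> nat \<Rightarrow> real" where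
  "second_diff_eig n k = (2 * sin (real k * pi / real (2 * (n + 1)))) ^ 2"

lemma dim_second_diff_mat [simp]:
  "dim_row (second_diff_mat n) = n" "dim_col (second_diff_mat n) = n"
  unfolding second_diff_mat_def by simp_all

lemma second_diff_mat_mult_vec:
  assumes "v \<in> carrier_vec n" "i < n"
  shows "(second_diff_mat n *\<^sub>v v) $ i
    = 2 * v $ i - (if i + 1 < n then v $ (i + 1) else 0) - (if 0 < i then v $ (i - 1) else 0)"
proof -
  have "(second_diff_mat n *\<^sub>v v) $ i
      = (\<Sum>j<n. 2 * (if j = i then v $ j else 0) - (if j = i + 1 then v $ j else 0)
                 - (if 0 < i \<and> j = i - 1 then v $ j else 0))"
    using assms by (auto simp: second_diff_mat_def scalar_prod_def lessThan_atLeast0 intro!: sum.cong)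
  also have "\<dots> = 2 * v $ i - (if i + 1 < n then v $ (i + 1) else 0) - (if 0 < i then v $ (i - 1) else 0)"
    using assms(2)
    by (simp add: sum_subtractf sum_distrib_left[symmetric])
  finally show ?thesis .
qed

lemma sin_add_sin_two_steps:
  "sin (real (j + 2) * x) + sin (real j * x) = 2 * cos x * sin (real (j + 1) * x)"
proof -
  have "sin (real (j + 2) * x) = sin (real (j + 1) * x + x)"
    and "sin (real j * x) = sin (real (j + 1) * x - x)"
    by (simp_all add: algebra_simps)
  then show ?thesis by (simp add: sin_add sin_diff)
qed

lemma second_diff_mat_eigenvalue:
  assumes k: "1 \<le> k" "k \<le> n"
  shows "eigenvalue (second_diff_mat n) (second_diff_eig n k)"
proof -
  define x where "x = real k * pi / real (n + 1)"
  define s where "s j = sin (real j * x)" for j :: nat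
  define v where "v = vec n (\<lambda>j. s (j + 1))"
  have v: "v \<in> carrier_vec n" unfolding v_def by simp
  have "real k * pi / real (n + 1) < real (n + 1) * pi / real (n + 1)"
    using k by (intro divide_strict_right_mono mult_strict_right_mono) auto
  then have x: "0 < x" "x < pi"
    using k by (simp_all add: x_def)
  have "real (n + 1) * x = real k * pi"
    unfolding x_def by simp
  then have s_end: "s (n + 1) = 0"
    unfolding s_def by (simp only: sin_npi)
  have eig: "2 - 2 * cos x = second_diff_eig n k"
  proof -
    have "x = 2 * (real k * pi / real (2 * (n + 1)))" unfolding x_def by (simp add: field_simps)
    then have "cos x = 1 - 2 * sin (real k * pi / real (2 * (n + 1))) ^ 2"
      by (simp only: cos_double_sin)
    then show ?thesis unfolding second_diff_eig_def by (simp add: power_mult_distrib)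
  qed
  have "second_diff_mat n *\<^sub>v v = (2 - 2 * cos x) \<cdot>\<^sub>v v"
  proof (rule eq_vecI)
    fix i assume "i < dim_vec ((2 - 2 * cos x) \<cdot>\<^sub>v v)"
    then have i: "i < n" using v by simp
    have up: "(if i + 1 < n then v $ (i + 1) else 0) = s (i + 2)"
    proof (cases "i + 1 < n")
      case False
      then have "i + 2 = n + 1" using i by simp
      then show ?thesis using False s_end by simp
    qed (simp add: v_def)
    have down: "(if 0 < i then v $ (i - 1) else 0) = s i"
      using i by (auto simp: v_def s_def)
    have "(second_diff_mat n *\<^sub>v v) $ i = 2 * s (i + 1) - s (i + 2) - s i"
      unfolding second_diff_mat_mult_vec[OF v i] up down using i by (simp add: v_def)
    also have "\<dots> = (2 - 2 * cos x) * s (i + 1)"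
      using sin_add_sin_two_steps[of i x] unfolding s_def by (simp add: algebra_simps)
    finally show "(second_diff_mat n *\<^sub>v v) $ i = ((2 - 2 * cos x) \<cdot>\<^sub>v v) $ i"
      using i by (simp add: v_def)
  qed (use v in simp)
  moreover have "v \<noteq> 0\<^sub>v n"
  proof -
    have "v $ 0 = sin x" using k by (simp add: v_def s_def)
    then have "v $ 0 \<noteq> 0" using sin_gt_zero[OF x] by simp
    then show ?thesis using k by auto
  qed
  ultimately show ?thesis
    unfolding eigenvalue_def eigenvector_def eig[symmetric] using v by auto
qed

lemma second_diff_eig_strict_mono_on: "strict_mono_on {..n} (second_diff_eig n)"
proof (rule strict_mono_onI)
  fix j k assume jk: "j \<in> {..n}" "k \<in> {..n}" "j < k"
  let ?x = "\<lambda>k. real k * pi / real (2 * (n + 1))"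
  have "?x j < ?x k"
    using jk by (intro divide_strict_right_mono mult_strict_right_mono) auto
  moreover have "?x k \<le> real (n + 1) * pi / real (2 * (n + 1))"
    using jk by (intro divide_right_mono mult_right_mono) auto
  moreover have "real (n + 1) * pi / real (2 * (n + 1)) = pi / 2"
    by (simp add: field_simps)
  ultimately have bounds: "0 \<le> ?x j" "?x j < ?x k" "?x k \<le> pi / 2"
    by (simp, linarith+)
  moreover have "0 \<le> sin a \<and> sin a < sin b" if "0 \<le> a" "a < b" "b \<le> pi / 2" for a b :: real
    using that pi_gt_zero by (auto intro!: sin_ge_zero sin_monotone_2pi)
  ultimately have "0 \<le> sin (?x j)" "sin (?x j) < sin (?x k)"
    by blast+
  then show "second_diff_eig n j < second_diff_eig n k"
    unfolding second_diff_eig_def by (intro power_strict_mono) auto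
qed

lemma second_diff_eig_pos:
  assumes "1 \<le> k" "k \<le> n"
  shows "0 < second_diff_eig n k"
  using strict_mono_onD[OF second_diff_eig_strict_mono_on, of 0 n k] assms
  by (simp add: second_diff_eig_def)

text \<open>The \<open>n\<close> distinct eigenvalues found above exhaust the spectrum, since the characteristic
  polynomial has degree \<open>n\<close>.\<close>

lemma eigenvalues_second_diff_mat: "{l. eigenvalue (second_diff_mat n) l} = second_diff_eig n ` {1..n}"
proof -
  have carrier: "second_diff_mat n \<in> carrier_mat n n" by (rule carrier_matI) simp_all
  have "inj_on (second_diff_eig n) {1..n}"
    using strict_mono_on_imp_inj_on[OF second_diff_eig_strict_mono_on]
    by (rule inj_on_subset) auto
  then have card: "card (second_diff_eig n ` {1..n}) = n" by (simp add: card_image)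
  have sub: "second_diff_eig n ` {1..n} \<subseteq> {l. eigenvalue (second_diff_mat n) l}"
    using second_diff_mat_eigenvalue by (simp add: image_subset_iff)
  have "finite {l. eigenvalue (second_diff_mat n) l}" "card {l. eigenvalue (second_diff_mat n) l} \<le> n"
    by (rule eigenvalues_finite_card_le[OF carrier])+
  then show ?thesis using card_seteq[OF _ sub] card by simp
qed

lemma dim_Jmat [simp]: "dim_row (Jmat m) = m - 1" "dim_col (Jmat m) = m"
  unfolding Jmat_def by simp_all

lemma Jmat_mult_transpose: "Jmat (Suc n) * transpose_mat (Jmat (Suc n)) = second_diff_mat n"
proof (rule eq_matI)
  fix i j assume "i < dim_row (second_diff_mat n)" "j < dim_col (second_diff_mat n)"
  then have i: "i < n" and j: "j < n" by simp_all
  let ?J = "Jmat (Suc n)"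
  have "(?J * transpose_mat ?J) $$ (i, j) = (\<Sum>k<Suc n. ?J $$ (i, k) * ?J $$ (j, k))"
    using i j by (simp add: scalar_prod_def lessThan_atLeast0)
  also have "\<dots> = (\<Sum>k<Suc n. (if k = i + 1 then ?J $$ (j, k) else 0) - (if k = i then ?J $$ (j, k) else 0))"
    using i by (intro sum.cong) (auto simp: Jmat_def)
  also have "\<dots> = ?J $$ (j, i + 1) - ?J $$ (j, i)"
    using i by (simp add: sum_subtractf)
  also have "\<dots> = second_diff_mat n $$ (i, j)"
    using i j by (auto simp: Jmat_def second_diff_mat_def)
  finally show "(?J * transpose_mat ?J) $$ (i, j) = second_diff_mat n $$ (i, j)" .
qed simp_all

lemma eigenvalues_smult_kron_Jmat_gram:
  fixes c :: real and n d :: nat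
  assumes c: "c \<noteq> 0" and d: "0 < d"
  defines "H \<equiv> c \<cdot>\<^sub>m kron (Jmat (Suc n)) (1\<^sub>m d)"
  shows "{l. eigenvalue (H * transpose_mat H) l} = (\<lambda>k. c\<^sup>2 * second_diff_eig n k) ` {1..n}"
proof -
  have T: "second_diff_mat n \<in> carrier_mat n n" by (rule carrier_matI) simp_all
  have "H * transpose_mat H = c\<^sup>2 \<cdot>\<^sub>m kron (second_diff_mat n) (1\<^sub>m d)"
    unfolding H_def gram_smult_mat gram_kron_one Jmat_mult_transpose ..
  moreover have "kron (second_diff_mat n) (1\<^sub>m d) \<in> carrier_mat (n * d) (n * d)"
    by (rule carrier_matI) simp_all
  ultimately have "eigenvalue (H * transpose_mat H) l \<longleftrightarrow> l / c\<^sup>2 \<in> second_diff_eig n ` {1..n}" for l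
    using c eigenvalues_second_diff_mat[of n]
    by (simp add: eigenvalue_smult_mat_iff eigenvalue_kron_one_mat_iff[OF T d] set_eq_iff)
  then show ?thesis
    using c by (auto simp: image_iff divide_eq_eq mult.commute)
qed

lemma smult_kron_Jmat_gram_pos_eigenvalue:
  fixes c :: real
  assumes c: "c \<noteq> 0" and d: "0 < d" and m: "2 \<le> m"
  defines "H \<equiv> c \<cdot>\<^sub>m kron (Jmat m) (1\<^sub>m d)"
  shows "\<exists>l>0. eigenvalue (H * transpose_mat H) l"
proof -
  obtain n where n: "m = Suc n" "1 \<le> n" using m by (cases m) auto
  have "c\<^sup>2 * second_diff_eig n 1 \<in> {l. eigenvalue (H * transpose_mat H) l}"
    unfolding H_def n(1) eigenvalues_smult_kron_Jmat_gram[OF c d]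
    using n(2) by (intro image_eqI[where x = 1]) simp_all
  moreover have "0 < c\<^sup>2 * second_diff_eig n 1"
    using c n(2) second_diff_eig_pos[of 1 n] by simp
  ultimately show ?thesis by blast
qed

lemma kappa_smult_kron_Jmat:
  fixes c :: real
  assumes c: "c \<noteq> 0" and d: "0 < d" and m: "2 \<le> m"
  shows "kappa (c \<cdot>\<^sub>m kron (Jmat m) (1\<^sub>m d))
    = sin (real (m - 1) * pi / real (2 * m)) / sin (pi / real (2 * m))"
proof -
  obtain n where n: "m = Suc n" "1 \<le> n" using m by (cases m) auto
  define H where "H = c \<cdot>\<^sub>m kron (Jmat (Suc n)) (1\<^sub>m d)"
  define \<mu> where "\<mu> k = c\<^sup>2 * second_diff_eig n k" for k
  have H: "H \<in> carrier_mat (n * d) (Suc n * d)" by (rule carrier_matI) (simp_all add: H_def)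
  have mono: "\<mu> j < \<mu> k" if "j < k" "k \<le> n" for j k
    using c that strict_mono_onD[OF second_diff_eig_strict_mono_on, of j n k] by (simp add: \<mu>_def)
  have "{l. eigenvalue (H * transpose_mat H) l \<and> 0 < l} = \<mu> ` {1..n}"
    using eigenvalues_smult_kron_Jmat_gram[OF c d, of n] second_diff_eig_pos c
    unfolding H_def \<mu>_def by auto
  moreover have "Max (\<mu> ` {1..n}) = \<mu> n"
    using n mono by (intro Max_eqI) (auto simp: le_less)
  moreover have "Min (\<mu> ` {1..n}) = \<mu> 1"
    using n mono by (intro Min_eqI) (auto simp: le_less)
  ultimately have "kappa H = sqrt (\<mu> n / \<mu> 1)"
    using kappa_eq_sqrt_Max_div_Min[OF H] smult_kron_Jmat_gram_pos_eigenvalue[OF c d m]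
    unfolding H_def n(1) by simp
  also have "\<dots> = sin (real n * pi / real (2 * (n + 1))) / sin (pi / real (2 * (n + 1)))"
  proof -
    let ?s = "\<lambda>k. sin (real k * pi / real (2 * (n + 1)))"
    have s_pos: "0 < ?s k" if "1 \<le> k" "k \<le> n" for k
    proof (rule sin_gt_zero)
      have "real k * pi < real (2 * (n + 1)) * pi" using that by (intro mult_strict_right_mono) auto
      then show "real k * pi / real (2 * (n + 1)) < pi" by (simp add: field_simps)
    qed (use that in simp)
    have "0 < ?s n / ?s 1" using s_pos[of n] s_pos[of 1] n by simp
    moreover have "\<mu> n / \<mu> 1 = (?s n / ?s 1)\<^sup>2"
      using c by (simp add: \<mu>_def second_diff_eig_def power_divide power_mult_distrib)
    ultimately show ?thesis by (simp only: real_sqrt_abs abs_of_pos of_nat_1 mult_1)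
  qed
  finally show ?thesis using n by (simp add: H_def)
qed

section \<open>Trigonometric bounds\<close>

lemma mult_cos_less_sin:
  assumes "0 < x" "x < pi / 2"
  shows "x * cos x < sin x"
proof -
  obtain z where z: "0 < z" "z < x" "sin x - sin 0 = (x - 0) * cos z"
    using MVT2[of 0 x sin cos] assms by auto
  have "cos x < cos z" using z assms cos_mono_less_eq[of x z] by auto
  then show ?thesis using z assms by (simp add: mult_left_mono)
qed

lemma sin_ratio_bounds:
  fixes m :: nat
  assumes m: "2 \<le> m"
  shows "real m / 4 \<le> sin (real (m - 1) * pi / real (2 * m)) / sin (pi / real (2 * m))"
    and "sin (real (m - 1) * pi / real (2 * m)) / sin (pi / real (2 * m)) < real m"
proof -
  define b where "b = pi / real (2 * m)"
  have b: "0 < b" "b \<le> pi / 4" using m by (auto simp: b_def field_simps)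
  then have b2: "b < pi / 2" by simp
  have sb: "0 < sin b" using b b2 by (intro sin_gt_zero) auto
  have cb: "0 < cos b" using b b2 by (intro cos_gt_zero) auto
  have "real (m - 1) * pi / real (2 * m) = pi / 2 - b"
    using m by (simp add: b_def field_simps of_nat_diff)
  then have num: "sin (real (m - 1) * pi / real (2 * m)) = cos b" by (simp add: sin_cos_eq)
  have "b * cos b < sin b" using mult_cos_less_sin b b2 by blast
  then have "cos b / sin b < 1 / b" using sb b by (simp add: field_simps)
  also have "1 / b = 2 * real m / pi" using m by (simp add: b_def)
  also have "\<dots> \<le> real m" using pi_ge_two m by (simp add: field_simps)
  finally show "sin (real (m - 1) * pi / real (2 * m)) / sin (pi / real (2 * m)) < real m"
    unfolding num b_def[symmetric] .
  have "cos (pi / 3) \<le> cos b" using b by (intro cos_monotone_0_pi_le) auto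
  then have c12: "1 / 2 \<le> cos b" by (simp add: cos_60)
  have "real m / 4 \<le> real m / pi" using m pi_less_4 by (intro divide_left_mono) auto
  also have "real m / pi = (1 / 2) / b" using m by (simp add: b_def)
  also have "\<dots> \<le> cos b / b" using c12 b by (intro divide_right_mono) auto
  also have "\<dots> \<le> cos b / sin b" using sin_x_le_x[of b] b sb cb by (simp add: frac_le)
  finally show "real m / 4 \<le> sin (real (m - 1) * pi / real (2 * m)) / sin (pi / real (2 * m))"
    unfolding num b_def[symmetric] .
qed

theorem lemma3:
  fixes Lf :: real and m1 m2 d :: nat
  assumes "Lf > 0" and "m1 \<ge> 2" and "m2 \<ge> 1" and "even (m1 * m2)"
    and "d \<ge> 5" and "odd d"
  defines "m \<equiv> 3 * m1 * m2"
  defines "H \<equiv> (real m * Lf) \<cdot>\<^sub>m kron (Jmat m) (1\<^sub>m d)"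
  defines "Abar \<equiv> (real m * Lf) \<cdot>\<^sub>m kron (Jrows m (Mset m1 m2)) (1\<^sub>m d)"
  defines "A \<equiv> (real m * Lf) \<cdot>\<^sub>m kron (Jrows m (MCset m1 m2)) (1\<^sub>m d)"
  shows "real m / 4 \<le> kappa (stack Abar A)
       \<and> kappa (stack Abar A) = kappa H
       \<and> kappa H = sin (real (3 * m1 * m2 - 1) * pi / real (6 * m1 * m2)) / sin (pi / real (6 * m1 * m2))
       \<and> kappa H < real m"
proof -
  define c where "c = real m * Lf"
  define rs where "rs = map (\<lambda>k. k - 1) (Mset m1 m2 @ MCset m1 m2)"
  have "m1 * 1 \<le> m1 * (3 * m2)" using assms(3) by (intro mult_le_mono2) simp
  moreover have "m = m1 * (3 * m2)" by (simp add: m_def)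
  ultimately have m: "2 \<le> m" using assms(2) by linarith
  have c: "c \<noteq> 0" using m assms(1) by (simp add: c_def)
  have d: "0 < d" using assms(5) by simp
  have H: "H \<in> carrier_mat ((m - 1) * d) (m * d)"
    by (rule carrier_matI) (simp_all add: H_def)
  have stack: "stack Abar A = c \<cdot>\<^sub>m kron (select_rows (Jmat m) rs) (1\<^sub>m d)"
    unfolding Abar_def A_def Jrows_def c_def rs_def map_append
    by (simp add: stack_smult_mat stack_kron stack_select_rows)
  have "transpose_mat (stack Abar A) * stack Abar A = transpose_mat H * H"
    using Mset_MCset_perm[of m1 m2] assms(2)
    unfolding stack H_def c_def[symmetric] gram_smult_mat gram_kron_one rs_def[symmetric]
    by (simp add: gram_select_rows_perm m_def)
  moreover have "\<exists>l>0. eigenvalue (H * transpose_mat H) l"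
    unfolding H_def c_def[symmetric] by (rule smult_kron_Jmat_gram_pos_eigenvalue[OF c d m])
  ultimately have "kappa (stack Abar A) = kappa H"
    by (intro kappa_eq_if_gram_eq[OF _ H]) (auto simp: stack)
  moreover have "kappa H = sin (real (m - 1) * pi / real (2 * m)) / sin (pi / real (2 * m))"
    unfolding H_def c_def[symmetric] by (rule kappa_smult_kron_Jmat[OF c d m])
  moreover have "3 * m1 * m2 - 1 = m - 1" "6 * m1 * m2 = 2 * m" by (simp_all add: m_def)
  ultimately show ?thesis
    using sin_ratio_bounds[OF m] by (simp only:)
qed

end
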